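(* Let $\mathcal E$ be a nest on a complex Banach space $X$ and let $\Phi,\Theta$ be admissible support functions on $\mathcal E$ such that $\mathcal M(\Phi)=\mathcal M(\Theta)$. Then $\Phi(E)=\Theta(E)$ for every $E\in\mathcal E\setminus\{\{0\}\}$.
   Context: A nest $\mathcal E$ on $X$ is a family of closed linear subspaces of $X$, totally ordered by inclusion, containing $\{0\}$ and $X$, closed under arbitrary meets $\wedge$ (intersections) and joins $\vee$ (norm-closed linear spans of unions). For $E\in\mathcal E$, $E_-=\vee\{F\in\mathcal E: F\subsetneq E\}$. A support function on $\mathcal E$ is an inclusion-preserving map $\Phi:\mathcal E\to\mathcal E$; it is admissible if for every $N\in\mathcal E\setminus\{\{0\}\}$, $\vee_{E\in\mathcal E,E\subsetneq N}\Phi(E)=\Phi(N_-)$. For a support function $\Phi$, $\mathcal M(\Phi)=\{T\in\mathcal B(X): TE\subseteq\Phi(E)\ \forall E\in\mathcal E\}$. *)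

theory Defs
  imports "HOL-Analysis.Analysis"
begin

text \<open>Complex normed vector spaces: a real normed vector space with a compatible
  complex scalar multiplication (the library has no complex vector space classes).\<close>

class complex_normed_vector = real_normed_vector +
  fixes scaleC :: "complex \<Rightarrow> 'a \<Rightarrow> 'a"
  assumes scaleC_add_right: "scaleC a (x + y) = scaleC a x + scaleC a y"
    and scaleC_add_left: "scaleC (a + b) x = scaleC a x + scaleC b x"
    and scaleC_scaleC: "scaleC a (scaleC b x) = scaleC (a * b) x"
    and scaleC_one: "scaleC 1 x = x"
    and scaleR_scaleC: "scaleR r x = scaleC (complex_of_real r) x"
    and norm_scaleC: "norm (scaleC a x) = cmod a * norm x"

class complex_banach = complex_normed_vector + banach

definition csubspace :: "'a::complex_normed_vector set \<Rightarrow> bool" where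
  "csubspace S \<longleftrightarrow> 0 \<in> S \<and> (\<forall>x\<in>S. \<forall>y\<in>S. x + y \<in> S) \<and> (\<forall>c. \<forall>x\<in>S. scaleC c x \<in> S)"

definition closed_csubspace :: "'a::complex_normed_vector set \<Rightarrow> bool" where
  "closed_csubspace S \<longleftrightarrow> csubspace S \<and> closed S"

definition cspan :: "'a::complex_normed_vector set \<Rightarrow> 'a set" where
  "cspan S = \<Inter>{V. csubspace V \<and> S \<subseteq> V}"

definition sjoin :: "'a::complex_normed_vector set set \<Rightarrow> 'a set" where
  "sjoin F = closure (cspan (\<Union>F))"

text \<open>Meet of a family of subspaces: intersection (the empty meet is the whole space).\<close>
definition smeet :: "'a::complex_normed_vector set set \<Rightarrow> 'a set" where
  "smeet F = \<Inter>F"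

definition clinear :: "('a::complex_normed_vector \<Rightarrow> 'b::complex_normed_vector) \<Rightarrow> bool" where
  "clinear T \<longleftrightarrow> (\<forall>x y. T (x + y) = T x + T y) \<and> (\<forall>c x. T (scaleC c x) = scaleC c (T x))"

definition bounded_clinear :: "('a::complex_normed_vector \<Rightarrow> 'b::complex_normed_vector) \<Rightarrow> bool" where
  "bounded_clinear T \<longleftrightarrow> clinear T \<and> (\<exists>K. \<forall>x. norm (T x) \<le> norm x * K)"

definition nest :: "'a::complex_normed_vector set set \<Rightarrow> bool" where
  "nest \<E> \<longleftrightarrow>
     (\<forall>E\<in>\<E>. closed_csubspace E) \<and>
     (\<forall>E\<in>\<E>. \<forall>F\<in>\<E>. E \<subseteq> F \<or> F \<subseteq> E) \<and>
     {0} \<in> \<E> \<and> UNIV \<in> \<E> \<and>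
     (\<forall>F. F \<subseteq> \<E> \<longrightarrow> smeet F \<in> \<E>) \<and>
     (\<forall>F. F \<subseteq> \<E> \<longrightarrow> sjoin F \<in> \<E>)"

definition pred_nest :: "'a::complex_normed_vector set set \<Rightarrow> 'a set \<Rightarrow> 'a set" where
  "pred_nest \<E> E = sjoin {F\<in>\<E>. F \<subset> E}"

definition support_function ::
    "'a::complex_normed_vector set set \<Rightarrow> ('a set \<Rightarrow> 'a set) \<Rightarrow> bool" where
  "support_function \<E> \<Phi> \<longleftrightarrow>
     (\<forall>E\<in>\<E>. \<Phi> E \<in> \<E>) \<and> (\<forall>E\<in>\<E>. \<forall>F\<in>\<E>. E \<subseteq> F \<longrightarrow> \<Phi> E \<subseteq> \<Phi> F)"

definition admissible ::
    "'a::complex_normed_vector set set \<Rightarrow> ('a set \<Rightarrow> 'a set) \<Rightarrow> bool" where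
  "admissible \<E> \<Phi> \<longleftrightarrow> support_function \<E> \<Phi> \<and>
     (\<forall>N\<in>\<E>. N \<noteq> {0} \<longrightarrow> sjoin (\<Phi> ` {E\<in>\<E>. E \<subset> N}) = \<Phi> (pred_nest \<E> N))"

definition M_space ::
    "'a::complex_normed_vector set set \<Rightarrow> ('a set \<Rightarrow> 'a set) \<Rightarrow> ('a \<Rightarrow> 'a) set" where
  "M_space \<E> \<Phi> = {T. bounded_clinear T \<and> (\<forall>E\<in>\<E>. T ` E \<subseteq> \<Phi> E)}"

end

theory Submission
  imports Defs
begin

text \<open>For each \<open>E \<noteq> {0}\<close>, one inclusion \<open>\<Phi> E \<subseteq> \<Theta> E\<close> suffices by symmetry.
  Rank-one operators \<open>x \<mapsto> \<phi> x \<cdot> y\<close>, with \<open>\<phi>\<close> a Hahn--Banach functional vanishing on a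
  member \<open>F\<close> of the nest and nonzero at a point \<open>x\<^sub>0\<close> outside \<open>F\<close>, lie in \<open>\<M>(\<Phi>)\<close> as soon as
  \<open>y\<close> lies in \<open>\<Phi>(F')\<close> for every \<open>F' \<supset> F\<close>. If \<open>E\<^sub>- \<noteq> E\<close>, take \<open>F = E\<^sub>-\<close> and \<open>x\<^sub>0 \<in> E \<setminus> E\<^sub>-\<close>:
  every \<open>y \<in> \<Phi>(E)\<close> is then \<open>T x\<^sub>0\<close> for some \<open>T \<in> \<M>(\<Phi>) = \<M>(\<Theta>)\<close>, so \<open>y \<in> \<Theta>(E)\<close>.
  If \<open>E\<^sub>- = E\<close>, the same argument puts each \<open>\<Phi>(F)\<close>, \<open>F \<subset> E\<close>, into some \<open>\<Theta>(G)\<close> with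
  \<open>F \<subset> G \<subset> E\<close>, and admissibility gives \<open>\<Phi>(E) = \<Phi>(E\<^sub>-) = \<Squnion>\<^sub>F\<^sub>\<subset>\<^sub>E \<Phi>(F) \<subseteq> \<Theta>(E)\<close>.\<close>

definition sublinear :: "('a::real_vector \<Rightarrow> real) \<Rightarrow> bool" where
  "sublinear p \<longleftrightarrow> (\<forall>x y. p (x + y) \<le> p x + p y) \<and> (\<forall>t x. t > 0 \<longrightarrow> p (t *\<^sub>R x) = t * p x)"

lemma sublinear_zero: "sublinear p \<Longrightarrow> p 0 = 0"
proof -
  assume "sublinear p"
  then have "p ((2::real) *\<^sub>R 0) = 2 * p 0" unfolding sublinear_def by (metis zero_less_numeral)
  then show "p 0 = 0" by simp
qed

lemma sublinear_scaled_norm: "K \<ge> 0 \<Longrightarrow> sublinear (\<lambda>x::'a::real_normed_vector. K * norm x)"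
  unfolding sublinear_def
  by (auto simp: distrib_left[symmetric] intro: mult_left_mono norm_triangle_ineq)

text \<open>Real-linear functionals on subspaces are handled through their graphs, which makes
  extensions just supersets.\<close>

definition linear_graph :: "('a::real_vector \<times> real) set \<Rightarrow> bool" where
  "linear_graph G \<longleftrightarrow> (0, 0) \<in> G \<and> (\<forall>x a y b. (x, a) \<in> G \<longrightarrow> (y, b) \<in> G \<longrightarrow> (x + y, a + b) \<in> G)
     \<and> (\<forall>c x a. (x, a) \<in> G \<longrightarrow> (c *\<^sub>R x, c * a) \<in> G)"

definition dominated_by :: "('a \<Rightarrow> real) \<Rightarrow> ('a \<times> real) set \<Rightarrow> bool" where
  "dominated_by p G \<longleftrightarrow> (\<forall>(x, a) \<in> G. a \<le> p x)"

lemma linear_graph_add: "linear_graph G \<Longrightarrow> (x, a) \<in> G \<Longrightarrow> (y, b) \<in> G \<Longrightarrow> (x + y, a + b) \<in> G"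
  unfolding linear_graph_def by blast

lemma linear_graph_scaleR: "linear_graph G \<Longrightarrow> (x, a) \<in> G \<Longrightarrow> (c *\<^sub>R x, c * a) \<in> G"
  unfolding linear_graph_def by blast

lemma linear_graph_zero: "linear_graph G \<Longrightarrow> (0, 0) \<in> G"
  unfolding linear_graph_def by blast

lemma dominated_linear_graph_functional:
  assumes G: "linear_graph G" and p: "sublinear p" "dominated_by p G"
    and "(x, a) \<in> G" "(x, b) \<in> G"
  shows "a = b"
proof -
  have "a - b \<le> p 0" if "(x, a) \<in> G" "(x, b) \<in> G" for a b
  proof -
    have "(x + (-1) *\<^sub>R x, a + (-1) * b) \<in> G"
      using that by (intro linear_graph_add[OF G] linear_graph_scaleR[OF G])
    then show ?thesis using p(2) by (auto simp: dominated_by_def)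
  qed
  from this[OF assms(4,5)] this[OF assms(5,4)] show ?thesis
    using sublinear_zero[OF p(1)] by linarith
qed

lemma linear_graph_Union_chain:
  assumes "C \<noteq> {}" "\<forall>G\<in>C. linear_graph G" "\<forall>G\<in>C. \<forall>H\<in>C. G \<subseteq> H \<or> H \<subseteq> G"
  shows "linear_graph (\<Union>C)"
  unfolding linear_graph_def
proof (intro conjI allI impI)
  show "(0, 0) \<in> \<Union>C" using assms(1,2) linear_graph_zero by blast
next
  fix x a y b assume "(x, a) \<in> \<Union>C" "(y, b) \<in> \<Union>C"
  then obtain G H where "G \<in> C" "H \<in> C" "(x, a) \<in> G" "(y, b) \<in> H" by blast
  with assms(2,3) show "(x + y, a + b) \<in> \<Union>C" by (metis UnionI linear_graph_add subsetD)
next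
  fix c x a assume "(x, a) \<in> \<Union>C"
  with assms(2) show "(c *\<^sub>R x, c * a) \<in> \<Union>C" using linear_graph_scaleR by blast
qed

text \<open>The one-dimensional extension step: the value \<open>c\<close> at \<open>z\<close> is squeezed between the
  two families of bounds that domination forces on it.\<close>

lemma dominated_extension_value:
  assumes G: "linear_graph G" and p: "sublinear p" "dominated_by p G"
  obtains c where "\<And>x a t. (x, a) \<in> G \<Longrightarrow> a + t * c \<le> p (x + t *\<^sub>R z)"
proof -
  have padd: "p (x + y) \<le> p x + p y" and phom: "t > 0 \<Longrightarrow> p (t *\<^sub>R x) = t * p x" for x y t
    using p(1) unfolding sublinear_def by blast+
  have key: "b - p (y - z) \<le> p (y' + z) - b'" if "(y, b) \<in> G" "(y', b') \<in> G" for y b y' b'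
  proof -
    have "b + b' \<le> p (y + y')"
      using p(2) linear_graph_add[OF G that] by (auto simp: dominated_by_def)
    also have "\<dots> \<le> p (y - z) + p (y' + z)" using padd[of "y - z" "y' + z"] by simp
    finally show ?thesis by simp
  qed
  define S where "S = {b - p (y - z) | y b. (y, b) \<in> G}"
  have S: "S \<noteq> {}" "bdd_above S"
    unfolding bdd_above_def S_def using linear_graph_zero[OF G] key[OF _ linear_graph_zero[OF G]]
    by auto
  have lower: "b - p (y - z) \<le> Sup S" if "(y, b) \<in> G" for y b
    using that S by (auto simp: S_def intro!: cSup_upper)
  have upper: "Sup S \<le> p (y' + z) - b'" if "(y', b') \<in> G" for y' b'
    using that S key by (auto simp: S_def intro!: cSup_least)
  show ?thesis
  proof (rule that[of "Sup S"])
    fix x a and t :: real assume xa: "(x, a) \<in> G"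
    have scaled: "(inverse s *\<^sub>R x, inverse s * a) \<in> G" for s
      using linear_graph_scaleR[OF G xa] .
    consider "t = 0" | "t > 0" | "t < 0" by linarith
    then show "a + t * Sup S \<le> p (x + t *\<^sub>R z)"
    proof cases
      case 1 then show ?thesis using p(2) xa by (auto simp: dominated_by_def)
    next
      case 2
      have "t * Sup S \<le> t * (p (inverse t *\<^sub>R x + z) - inverse t * a)"
        using upper[OF scaled] 2 by (simp add: mult_left_mono)
      also have "\<dots> = p (t *\<^sub>R (inverse t *\<^sub>R x + z)) - a"
        unfolding phom[OF 2] using 2 by (simp add: right_diff_distrib)
      also have "t *\<^sub>R (inverse t *\<^sub>R x + z) = x + t *\<^sub>R z"
        using 2 by (simp add: scaleR_add_right)
      finally show ?thesis by simp
    next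
      case 3
      define s where "s = - t"
      have s: "s > 0" using 3 by (simp add: s_def)
      have "s * (inverse s * a - p (inverse s *\<^sub>R x - z)) \<le> s * Sup S"
        using lower[OF scaled] s by (simp add: mult_left_mono)
      also have "s * (inverse s * a - p (inverse s *\<^sub>R x - z)) = a - p (s *\<^sub>R (inverse s *\<^sub>R x - z))"
        unfolding phom[OF s] using s by (simp add: right_diff_distrib)
      also have "s *\<^sub>R (inverse s *\<^sub>R x - z) = x + t *\<^sub>R z"
        using s by (simp add: scaleR_diff_right s_def)
      finally show ?thesis by (simp add: s_def)
    qed
  qed
qed

lemma linear_graph_extend:
  assumes "linear_graph G"
  shows "linear_graph {(x + t *\<^sub>R z, a + t * c) | x a t. (x, a) \<in> G}" (is "linear_graph ?G'")
  unfolding linear_graph_def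
proof (intro conjI allI impI)
  show "(0, 0) \<in> ?G'" using linear_graph_zero[OF assms] by force
next
  fix x a y b assume "(x, a) \<in> ?G'" "(y, b) \<in> ?G'"
  then obtain x1 a1 t1 x2 a2 t2 where h: "(x1, a1) \<in> G" "(x2, a2) \<in> G"
    "x = x1 + t1 *\<^sub>R z" "a = a1 + t1 * c" "y = x2 + t2 *\<^sub>R z" "b = a2 + t2 * c"
    by blast
  have "(x + y, a + b) = ((x1 + x2) + (t1 + t2) *\<^sub>R z, (a1 + a2) + (t1 + t2) * c)"
    using h by (simp add: algebra_simps)
  then show "(x + y, a + b) \<in> ?G'" using linear_graph_add[OF assms h(1,2)] by blast
next
  fix d x a assume "(x, a) \<in> ?G'"
  then obtain x1 a1 t1 where h: "(x1, a1) \<in> G" "x = x1 + t1 *\<^sub>R z" "a = a1 + t1 * c"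
    by blast
  have "(d *\<^sub>R x, d * a) = (d *\<^sub>R x1 + (d * t1) *\<^sub>R z, d * a1 + (d * t1) * c)"
    using h by (simp add: algebra_simps)
  then show "(d *\<^sub>R x, d * a) \<in> ?G'" using linear_graph_scaleR[OF assms h(1)] by blast
qed

lemma maximal_dominated_linear_graph:
  assumes "linear_graph G0" "dominated_by p G0"
  obtains M where "linear_graph M" "dominated_by p M" "G0 \<subseteq> M"
    "\<And>G. linear_graph G \<Longrightarrow> dominated_by p G \<Longrightarrow> M \<subseteq> G \<Longrightarrow> G = M"
proof -
  define A where "A = {G. linear_graph G \<and> dominated_by p G \<and> G0 \<subseteq> G}"
  have "\<exists>U\<in>A. \<forall>X\<in>C. X \<subseteq> U" if C: "C \<in> chains A" for C
  proof (cases "C = {}")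
    case True then show ?thesis using assms by (auto simp: A_def)
  next
    case False
    have "C \<subseteq> A" using C chainsD2 by blast
    then have "\<Union>C \<in> A"
      using False linear_graph_Union_chain[OF False] chainsD[OF C]
      by (auto simp: A_def dominated_by_def)
    then show ?thesis by blast
  qed
  then obtain M where "M \<in> A" "\<forall>X\<in>A. M \<subseteq> X \<longrightarrow> X = M"
    using Zorn_Lemma2[of A] by blast
  with that show ?thesis by (auto simp: A_def)
qed

theorem Hahn_Banach_graph:
  assumes p: "sublinear p" and G0: "linear_graph G0" "dominated_by p G0"
  shows "\<exists>h. linear h \<and> (\<forall>x. h x \<le> p x) \<and> (\<forall>(x, a)\<in>G0. h x = a)"
proof -
  obtain M where M: "linear_graph M" "dominated_by p M" "G0 \<subseteq> M"
    and Mmax: "\<And>G. linear_graph G \<Longrightarrow> dominated_by p G \<Longrightarrow> M \<subseteq> G \<Longrightarrow> G = M"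
    using maximal_dominated_linear_graph[OF G0] by blast
  have total: "\<exists>a. (z, a) \<in> M" for z
  proof -
    obtain c where c: "\<And>x a t. (x, a) \<in> M \<Longrightarrow> a + t * c \<le> p (x + t *\<^sub>R z)"
      using dominated_extension_value[OF M(1) p M(2)] by blast
    define M' where "M' = {(x + t *\<^sub>R z, a + t * c) | x a t. (x, a) \<in> M}"
    have "M \<subseteq> M'" unfolding M'_def by force
    moreover have "dominated_by p M'" using c by (auto simp: M'_def dominated_by_def)
    ultimately have "M' = M" using Mmax linear_graph_extend[OF M(1)] unfolding M'_def by blast
    moreover have "(z, c) \<in> M'" unfolding M'_def using linear_graph_zero[OF M(1)] by force
    ultimately show ?thesis by blast
  qed
  have unique: "a = b" if "(x, a) \<in> M" "(x, b) \<in> M" for x a b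
    using dominated_linear_graph_functional[OF M(1) p M(2) that] .
  define h where "h z = (THE a. (z, a) \<in> M)" for z
  have hM: "(z, h z) \<in> M" for z
    unfolding h_def by (rule theI') (use total unique in blast)
  have hE: "h z = a" if "(z, a) \<in> M" for z a using unique[OF hM that] .
  have "linear h"
    by (rule linearI) (use hE linear_graph_add[OF M(1) hM hM] linear_graph_scaleR[OF M(1) hM] in auto)
  moreover have "h x \<le> p x" for x using M(2) hM by (auto simp: dominated_by_def)
  ultimately show ?thesis using hE M(3) by blast
qed

instantiation complex :: complex_normed_vector
begin

definition scaleC_complex :: "complex \<Rightarrow> complex \<Rightarrow> complex" where
  "scaleC_complex = (*)"

instance
  by standard (auto simp: scaleC_complex_def algebra_simps scaleR_conv_of_real norm_mult)

end

lemma csubspace_0: "csubspace S \<Longrightarrow> 0 \<in> S"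
  unfolding csubspace_def by blast

lemma csubspace_add: "csubspace S \<Longrightarrow> x \<in> S \<Longrightarrow> y \<in> S \<Longrightarrow> x + y \<in> S"
  unfolding csubspace_def by blast

lemma csubspace_scaleC: "csubspace S \<Longrightarrow> x \<in> S \<Longrightarrow> scaleC c x \<in> S"
  unfolding csubspace_def by blast

lemma csubspace_scaleR: "csubspace S \<Longrightarrow> x \<in> S \<Longrightarrow> c *\<^sub>R x \<in> S"
  by (simp add: scaleR_scaleC csubspace_scaleC)

lemma scaleC_zero_left [simp]: "scaleC 0 (x::'a::complex_normed_vector) = 0"
  using scaleR_scaleC[of 0 x] by simp

lemma scaleC_Complex:
  "scaleC (Complex a b) (x::'a::complex_normed_vector) = a *\<^sub>R x + b *\<^sub>R scaleC \<i> x"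
proof -
  have "Complex a b = complex_of_real a + complex_of_real b * \<i>" by (simp add: complex_eq_iff)
  then show ?thesis by (simp add: scaleC_add_left scaleC_scaleC[symmetric] scaleR_scaleC)
qed

text \<open>A bounded real-linear functional \<open>h\<close> is the real part of the complex-linear
  functional \<open>x \<mapsto> h x - \<i> h(\<i> x)\<close>.\<close>

lemma bounded_clinear_complexification:
  fixes h :: "'a::complex_normed_vector \<Rightarrow> real"
  assumes h: "linear h" and bound: "\<And>x. \<bar>h x\<bar> \<le> K * norm x"
  shows "bounded_clinear (\<lambda>x. Complex (h x) (- h (scaleC \<i> x)))" (is "bounded_clinear ?f")
  unfolding bounded_clinear_def clinear_def
proof (intro conjI allI exI)
  have h_scaleC: "h (scaleC (Complex a b) x) = a * h x + b * h (scaleC \<i> x)" for a b x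
    by (simp add: scaleC_Complex linear_add[OF h] linear_scale[OF h])
  show "?f (x + y) = ?f x + ?f y" for x y
    by (simp add: scaleC_add_right linear_add[OF h] complex_eq_iff)
  show "?f (scaleC c x) = scaleC c (?f x)" for c x
  proof -
    obtain a b where c: "c = Complex a b" using complex_surj by metis
    have "\<i> * Complex a b = Complex (-b) a" by (simp add: complex_eq_iff)
    then have "scaleC \<i> (scaleC (Complex a b) x) = scaleC (Complex (-b) a) x"
      by (simp add: scaleC_scaleC)
    then show ?thesis
      unfolding c by (simp add: scaleC_complex_def h_scaleC complex_eq_iff algebra_simps)
  qed
  show "norm (?f x) \<le> norm x * (2 * K)" for x
  proof -
    have "norm (?f x) \<le> \<bar>h x\<bar> + \<bar>h (scaleC \<i> x)\<bar>"
      using cmod_le[of "?f x"] by simp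
    also have "\<dots> \<le> K * norm x + K * norm (scaleC \<i> x)" using bound by (intro add_mono)
    finally show ?thesis by (simp add: norm_scaleC algebra_simps)
  qed
qed

lemma bounded_clinear_scaleC_const:
  "bounded_clinear \<phi> \<Longrightarrow> bounded_clinear (\<lambda>x. scaleC (\<phi> x) (y::'b::complex_normed_vector))"
  unfolding bounded_clinear_def clinear_def
proof (elim conjE exE, intro conjI allI exI)
  fix K assume \<phi>: "\<forall>x y. \<phi> (x + y) = \<phi> x + \<phi> y" "\<forall>c x. \<phi> (scaleC c x) = scaleC c (\<phi> x)"
    and K: "\<forall>x. norm (\<phi> x) \<le> norm x * K"
  show "scaleC (\<phi> (x + x')) y = scaleC (\<phi> x) y + scaleC (\<phi> x') y" for x x'
    by (simp add: \<phi> scaleC_add_left)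
  show "scaleC (\<phi> (scaleC c x)) y = scaleC c (scaleC (\<phi> x) y)" for c x
    by (simp add: \<phi> scaleC_scaleC scaleC_complex_def)
  show "norm (scaleC (\<phi> x) y) \<le> norm x * (K * norm y)" for x
    using mult_right_mono[OF spec[OF K, of x] norm_ge_zero[of y]]
    by (simp add: norm_scaleC mult.assoc)
qed

lemma infdist_closed_csubspace_le:
  assumes F: "csubspace F" and m: "m \<in> F"
  shows "\<bar>t\<bar> * infdist x0 F \<le> norm (m + t *\<^sub>R x0)"
proof (cases "t = 0")
  case False
  have "- (inverse t *\<^sub>R m) \<in> F" using csubspace_scaleR[OF F m, of "- inverse t"] by simp
  then have "infdist x0 F \<le> norm (x0 + inverse t *\<^sub>R m)"
    using infdist_le[of "- (inverse t *\<^sub>R m)" F x0] by (simp add: dist_norm)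
  then have "\<bar>t\<bar> * infdist x0 F \<le> \<bar>t\<bar> * norm (x0 + inverse t *\<^sub>R m)"
    by (simp add: mult_left_mono)
  also have "\<dots> = norm (t *\<^sub>R (x0 + inverse t *\<^sub>R m))" by simp
  also have "t *\<^sub>R (x0 + inverse t *\<^sub>R m) = m + t *\<^sub>R x0"
    using False by (simp add: scaleR_add_right)
  finally show ?thesis .
qed simp

lemma closed_csubspace_separating_functional:
  fixes F :: "'a::complex_normed_vector set"
  assumes F: "closed_csubspace F" and x0: "x0 \<notin> F"
  shows "\<exists>\<phi> :: 'a \<Rightarrow> complex. bounded_clinear \<phi> \<and> (\<forall>m\<in>F. \<phi> m = 0) \<and> \<phi> x0 = 1"
proof -
  have Fs: "csubspace F" and Fc: "closed F" using F by (auto simp: closed_csubspace_def)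
  define K where "K = 1 / infdist x0 F"
  have d: "infdist x0 F > 0"
    using infdist_pos_not_in_closed[OF Fc _ x0] csubspace_0[OF Fs] by blast
  then have K: "K \<ge> 0" by (simp add: K_def)
  define G0 where "G0 = {(m + t *\<^sub>R x0, t) | m t. m \<in> F}"
  have "linear_graph G0"
    unfolding linear_graph_def G0_def
  proof (intro conjI allI impI)
    show "(0, 0) \<in> {(m + t *\<^sub>R x0, t) | m t. m \<in> F}" using csubspace_0[OF Fs] by force
  next
    fix x a y b assume "(x, a) \<in> {(m + t *\<^sub>R x0, t) | m t. m \<in> F}" "(y, b) \<in> {(m + t *\<^sub>R x0, t) | m t. m \<in> F}"
    then obtain m1 m2 where "m1 \<in> F" "m2 \<in> F" "x = m1 + a *\<^sub>R x0" "y = m2 + b *\<^sub>R x0" by blast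
    then show "(x + y, a + b) \<in> {(m + t *\<^sub>R x0, t) | m t. m \<in> F}"
      using csubspace_add[OF Fs] by (auto simp: algebra_simps intro!: exI[of _ "m1 + m2"])
  next
    fix c x a assume "(x, a) \<in> {(m + t *\<^sub>R x0, t) | m t. m \<in> F}"
    then obtain m where "m \<in> F" "x = m + a *\<^sub>R x0" by blast
    then show "(c *\<^sub>R x, c * a) \<in> {(m + t *\<^sub>R x0, t) | m t. m \<in> F}"
      using csubspace_scaleR[OF Fs] by (auto simp: algebra_simps intro!: exI[of _ "c *\<^sub>R m"])
  qed
  moreover have "dominated_by (\<lambda>x. K * norm x) G0"
    unfolding dominated_by_def G0_def
  proof clarify
    fix m and t :: real assume "m \<in> F"
    then have "\<bar>t\<bar> * infdist x0 F \<le> norm (m + t *\<^sub>R x0)" by (rule infdist_closed_csubspace_le[OF Fs])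
    moreover have "t * infdist x0 F \<le> \<bar>t\<bar> * infdist x0 F"
      using d by (intro mult_right_mono) auto
    ultimately have "t * infdist x0 F \<le> norm (m + t *\<^sub>R x0)" by linarith
    then show "t \<le> K * norm (m + t *\<^sub>R x0)" using d by (simp add: K_def pos_le_divide_eq)
  qed
  ultimately obtain h where h: "linear h" "\<And>x. h x \<le> K * norm x" and hG0: "\<forall>(x, a)\<in>G0. h x = a"
    using Hahn_Banach_graph[OF sublinear_scaled_norm[OF K]] by blast
  have hF: "h m = 0" if "m \<in> F" for m
    using hG0 that unfolding G0_def by (metis (mono_tags, lifting) CollectI case_prodD add_0_right scale_zero_left)
  have hx0: "h x0 = 1"
    using hG0 csubspace_0[OF Fs] unfolding G0_def by (metis (mono_tags, lifting) CollectI case_prodD add_0 scale_one)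
  have "\<bar>h x\<bar> \<le> K * norm x" for x
    using h(2)[of x] h(2)[of "- x"] linear_neg[OF h(1), of x] by simp
  from bounded_clinear_complexification[OF h(1) this]
  have f: "bounded_clinear (\<lambda>x. Complex (h x) (- h (scaleC \<i> x)))" (is "bounded_clinear ?f") .
  have "?f m = 0" if "m \<in> F" for m
    using hF[OF that] hF[OF csubspace_scaleC[OF Fs that]] by (simp add: complex_eq_iff)
  moreover have "?f x0 \<noteq> 0" using hx0 by (simp add: complex_eq_iff)
  moreover have "bounded_clinear (\<lambda>x. ?f x * inverse (?f x0))"
    using bounded_clinear_scaleC_const[OF f, of "inverse (?f x0)"] by (simp add: scaleC_complex_def)
  ultimately show ?thesis by fastforce
qed

lemma sjoin_upper: "S \<in> \<F> \<Longrightarrow> S \<subseteq> sjoin \<F>"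
proof -
  assume "S \<in> \<F>"
  then have "S \<subseteq> cspan (\<Union>\<F>)" unfolding cspan_def by blast
  then show ?thesis unfolding sjoin_def using closure_subset by blast
qed

lemma sjoin_least:
  assumes "closed_csubspace V" "\<And>S. S \<in> \<F> \<Longrightarrow> S \<subseteq> V"
  shows "sjoin \<F> \<subseteq> V"
proof -
  have "\<Union>\<F> \<subseteq> V" using assms(2) by blast
  then have "cspan (\<Union>\<F>) \<subseteq> V"
    using assms(1) unfolding cspan_def closed_csubspace_def by blast
  then show ?thesis
    unfolding sjoin_def using assms(1) closure_minimal unfolding closed_csubspace_def by blast
qed

lemma nest_closed_csubspace: "nest \<E> \<Longrightarrow> E \<in> \<E> \<Longrightarrow> closed_csubspace E"
  unfolding nest_def by blast

lemma nest_linear: "nest \<E> \<Longrightarrow> E \<in> \<E> \<Longrightarrow> F \<in> \<E> \<Longrightarrow> E \<subseteq> F \<or> F \<subseteq> E"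
  unfolding nest_def by blast

lemma nest_sjoin: "nest \<E> \<Longrightarrow> \<F> \<subseteq> \<E> \<Longrightarrow> sjoin \<F> \<in> \<E>"
  unfolding nest_def by blast

lemma pred_nest_in_nest: "nest \<E> \<Longrightarrow> pred_nest \<E> E \<in> \<E>"
  unfolding pred_nest_def by (rule nest_sjoin) auto

lemma pred_nest_subset: "nest \<E> \<Longrightarrow> E \<in> \<E> \<Longrightarrow> pred_nest \<E> E \<subseteq> E"
  unfolding pred_nest_def by (rule sjoin_least[OF nest_closed_csubspace]) auto

lemma subset_pred_nest: "F \<in> \<E> \<Longrightarrow> F \<subset> E \<Longrightarrow> F \<subseteq> pred_nest \<E> E"
  unfolding pred_nest_def by (rule sjoin_upper) blast

lemma support_function_in_nest: "support_function \<E> \<Phi> \<Longrightarrow> E \<in> \<E> \<Longrightarrow> \<Phi> E \<in> \<E>"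
  unfolding support_function_def by blast

lemma support_function_mono:
  "support_function \<E> \<Phi> \<Longrightarrow> E \<in> \<E> \<Longrightarrow> F \<in> \<E> \<Longrightarrow> E \<subseteq> F \<Longrightarrow> \<Phi> E \<subseteq> \<Phi> F"
  unfolding support_function_def by blast

lemma rank_one_in_M_space:
  assumes N: "nest \<E>" and \<Phi>: "support_function \<E> \<Phi>" and F: "F \<in> \<E>" "x0 \<notin> F"
    and y: "\<And>F'. F' \<in> \<E> \<Longrightarrow> F \<subset> F' \<Longrightarrow> y \<in> \<Phi> F'"
  shows "\<exists>T \<in> M_space \<E> \<Phi>. T x0 = y"
proof -
  obtain \<phi> :: "'a \<Rightarrow> complex" where \<phi>: "bounded_clinear \<phi>" "\<forall>m\<in>F. \<phi> m = 0" "\<phi> x0 = 1"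
    using closed_csubspace_separating_functional[OF nest_closed_csubspace[OF N F(1)] F(2)] by blast
  define T where "T x = scaleC (\<phi> x) y" for x
  have "T ` E \<subseteq> \<Phi> E" if E: "E \<in> \<E>" for E
  proof -
    have \<Phi>E: "csubspace (\<Phi> E)"
      using nest_closed_csubspace[OF N support_function_in_nest[OF \<Phi> E]]
      by (simp add: closed_csubspace_def)
    have "E \<subseteq> F \<or> F \<subset> E" using nest_linear[OF N E F(1)] by blast
    then show ?thesis
      using \<phi>(2) y[OF E] csubspace_0[OF \<Phi>E] csubspace_scaleC[OF \<Phi>E] by (auto simp: T_def)
  qed
  moreover have "bounded_clinear T"
    unfolding T_def by (rule bounded_clinear_scaleC_const[OF \<phi>(1)])
  moreover have "T x0 = y" using \<phi>(3) by (simp add: T_def scaleC_one)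
  ultimately show ?thesis unfolding M_space_def by blast
qed

lemma M_space_subset_transfer:
  assumes N: "nest \<E>" and \<Phi>: "support_function \<E> \<Phi>"
    and MM: "M_space \<E> \<Phi> \<subseteq> M_space \<E> \<Theta>"
    and F: "F \<in> \<E>" and G: "G \<in> \<E>" "\<not> G \<subseteq> F"
    and y: "\<And>F'. F' \<in> \<E> \<Longrightarrow> F \<subset> F' \<Longrightarrow> y \<in> \<Phi> F'"
  shows "y \<in> \<Theta> G"
proof -
  obtain x0 where x0: "x0 \<in> G" "x0 \<notin> F" using G(2) by blast
  obtain T where "T \<in> M_space \<E> \<Phi>" "T x0 = y"
    using rank_one_in_M_space[OF N \<Phi> F x0(2) y] by blast
  then have "T \<in> M_space \<E> \<Theta>" "T x0 = y" using MM by blast+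
  then show ?thesis using G(1) x0(1) unfolding M_space_def by blast
qed

lemma support_subset_if_gap:
  assumes N: "nest \<E>" and \<Phi>: "support_function \<E> \<Phi>"
    and MM: "M_space \<E> \<Phi> \<subseteq> M_space \<E> \<Theta>"
    and E: "E \<in> \<E>" "pred_nest \<E> E \<noteq> E"
  shows "\<Phi> E \<subseteq> \<Theta> E"
proof
  fix y assume y: "y \<in> \<Phi> E"
  have "\<not> E \<subseteq> pred_nest \<E> E" using E pred_nest_subset[OF N E(1)] by blast
  then show "y \<in> \<Theta> E"
  proof (rule M_space_subset_transfer[OF N \<Phi> MM pred_nest_in_nest[OF N] E(1)])
    fix F' assume F': "F' \<in> \<E>" "pred_nest \<E> E \<subset> F'"
    then have "E \<subseteq> F'" using nest_linear[OF N E(1) F'(1)] subset_pred_nest[of F' \<E> E] by blast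
    then show "y \<in> \<Phi> F'" using support_function_mono[OF \<Phi> E(1) F'(1)] y by blast
  qed
qed

lemma support_subset_if_no_gap:
  assumes N: "nest \<E>" and \<Phi>: "admissible \<E> \<Phi>" and \<Theta>: "support_function \<E> \<Theta>"
    and MM: "M_space \<E> \<Phi> \<subseteq> M_space \<E> \<Theta>"
    and E: "E \<in> \<E>" "E \<noteq> {0}" "pred_nest \<E> E = E"
  shows "\<Phi> E \<subseteq> \<Theta> E"
proof -
  have \<Phi>s: "support_function \<E> \<Phi>" using \<Phi> by (simp add: admissible_def)
  have "\<Phi> F \<subseteq> \<Theta> E" if F: "F \<in> \<E>" "F \<subset> E" for F
  proof
    fix y assume y: "y \<in> \<Phi> F"
    have "\<exists>G\<in>\<E>. G \<subset> E \<and> \<not> G \<subseteq> F"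
    proof (rule ccontr)
      assume "\<not> ?thesis"
      then have "pred_nest \<E> E \<subseteq> F" unfolding pred_nest_def
        by (intro sjoin_least[OF nest_closed_csubspace[OF N F(1)]]) blast
      then show False using E(3) F(2) by blast
    qed
    then obtain G where G: "G \<in> \<E>" "G \<subset> E" "\<not> G \<subseteq> F" by blast
    have "y \<in> \<Phi> F'" if "F' \<in> \<E>" "F \<subset> F'" for F'
      using support_function_mono[OF \<Phi>s F(1) that(1)] that(2) y by blast
    then have "y \<in> \<Theta> G" by (rule M_space_subset_transfer[OF N \<Phi>s MM F(1) G(1,3)])
    then show "y \<in> \<Theta> E" using support_function_mono[OF \<Theta> G(1) E(1)] G(2) by blast
  qed
  then have "sjoin (\<Phi> ` {F\<in>\<E>. F \<subset> E}) \<subseteq> \<Theta> E"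
    using nest_closed_csubspace[OF N support_function_in_nest[OF \<Theta> E(1)]]
    by (intro sjoin_least) auto
  moreover have "sjoin (\<Phi> ` {F\<in>\<E>. F \<subset> E}) = \<Phi> (pred_nest \<E> E)"
    using \<Phi> E unfolding admissible_def by blast
  ultimately show ?thesis using E(3) by simp
qed

lemma M_space_subset_imp_support_subset:
  assumes "nest \<E>" "admissible \<E> \<Phi>" "support_function \<E> \<Theta>"
    and "M_space \<E> \<Phi> \<subseteq> M_space \<E> \<Theta>" and "E \<in> \<E>" "E \<noteq> {0}"
  shows "\<Phi> E \<subseteq> \<Theta> E"
proof (cases "pred_nest \<E> E = E")
  case True
  then show ?thesis using support_subset_if_no_gap assms by blast
next
  case False
  moreover have "support_function \<E> \<Phi>" using assms(2) by (simp add: admissible_def)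
  ultimately show ?thesis using support_subset_if_gap assms by blast
qed

theorem mainTheorem4:
  fixes \<E> :: "'a::complex_banach set set"
    and \<Phi> \<Theta> :: "'a set \<Rightarrow> 'a set"
  assumes "nest \<E>"
    and "admissible \<E> \<Phi>"
    and "admissible \<E> \<Theta>"
    and "M_space \<E> \<Phi> = M_space \<E> \<Theta>"
  shows "\<forall>E\<in>\<E>. E \<noteq> {0} \<longrightarrow> \<Phi> E = \<Theta> E"
proof (intro ballI impI)
  fix E assume E: "E \<in> \<E>" "E \<noteq> {0}"
  have "support_function \<E> \<Phi>" "support_function \<E> \<Theta>"
    using assms(2,3) by (simp_all add: admissible_def)
  then have "\<Phi> E \<subseteq> \<Theta> E" "\<Theta> E \<subseteq> \<Phi> E"
    using M_space_subset_imp_support_subset[OF assms(1,2), of \<Theta> E]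
      M_space_subset_imp_support_subset[OF assms(1,3), of \<Phi> E] assms(4) E
    by simp_all
  then show "\<Phi> E = \<Theta> E" by (rule subset_antisym)
qed

end
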